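(* Let $\nu_0=0$, $s>0$, $\gamma\ge0$, $u>0$. Then for every $r\ge0$ and $y_0\in[0,1]$, $$g_r(y_0)=y_0\exp\Big(-\int_0^r\big(1-y(\xi;y_0)\big)\big(s+\gamma(1-y(\xi;y_0))\big)\,d\xi\Big),$$ where $y(\cdot;y_0)$ solves $\dot y=-y(1-y)[s+\gamma(1-y)]+u(1-y)$, $y(0)=y_0$.
   Context: Embedded ASG: let $\Xi^\star$ be the set of finite rooted trees in which every vertex has outdegree at most 3, the children of an outdegree-2 vertex are labelled left and right, the children of an outdegree-3 vertex are labelled left, middle and right, and every outdegree-1 vertex carries a mark $\times$ or $\circ$. The embedded ASG process $(a_r)_{r\ge0}$ starts from a single unmarked root. Independently at each leaf $\ell$: at rate $s$ two children (left, right) are attached; at rate $\gamma$ three children (left, middle, right) are attached; at rate $u\nu_1$ one child is attached and $\ell$ is marked $\times$; at rate $u\nu_0$ one child is attached and $\ell$ is marked $\circ$. Typing: given a leaf-type configuration $c\in\{0,1\}^{\text{leaves}}$, vertex types $\bar c$ are propagated towards the root as follows. A $\times$-marked vertex has type 1 and a $\circ$-marked vertex has type 0. An outdegree-2 vertex has type 1 iff both children have type 1. An outdegree-3 vertex has type 0 iff its left child has type 0 or both its middle and right children have type 0. Ancestral leaf $\lambda_v$ of a vertex $v$: - a leaf is its own ancestral leaf; - for outdegree 2, $\lambda_v$ is $\lambda$ of the right child if the right child has type 0, and $\lambda$ of the left child otherwise; - for outdegree 3, $\lambda_v$ is $\lambda$ of the right child if the middle and right children both have type 0, and $\lambda$ of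 the left child otherwise; - for outdegree 1, $\lambda_v$ is $\lambda$ of the child. $g_r(y_0)$ is the probability that $c_{\lambda_{\rm root}(a_r)}=1$, where the leaves of $a_r$ are typed independently, each with type 1 with probability $y_0$, independently of $a_r$. *)

theory Defs
  imports "HOL-Analysis.Analysis"
begin

text \<open>Trees of the embedded ASG (the set Xi-star). Children are ordered
(left, middle, right). MutX / MutO are outdegree-1 vertices marked
cross / circle.\<close>
datatype asg = Leaf | Bin asg asg | Ter asg asg asg | MutX asg | MutO asg

primrec nleaves :: "asg \<Rightarrow> nat" where
  "nleaves Leaf = 1"
| "nleaves (Bin a b) = nleaves a + nleaves b"
| "nleaves (Ter a b c) = nleaves a + nleaves b + nleaves c"
| "nleaves (MutX a) = nleaves a"
| "nleaves (MutO a) = nleaves a"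

text \<open>A leaf-type configuration is a bool list listing the types of the
leaves in left-to-right order (True = type 1, False = type 0).
vtype t cs is the type of the root of t.\<close>
primrec vtype :: "asg \<Rightarrow> bool list \<Rightarrow> bool" where
  "vtype Leaf cs = hd cs"
| "vtype (Bin a b) cs =
     (vtype a (take (nleaves a) cs) \<and> vtype b (drop (nleaves a) cs))"
| "vtype (Ter a b c) cs =
     (let ca = take (nleaves a) cs; rest = drop (nleaves a) cs;
          cb = take (nleaves b) rest; cc = drop (nleaves b) rest
      in \<not> (\<not> vtype a ca \<or> (\<not> vtype b cb \<and> \<not> vtype c cc)))"
| "vtype (MutX a) cs = True"
| "vtype (MutO a) cs = False"

text \<open>Index (in left-to-right leaf order) of the ancestral leaf of the root.\<close>
primrec anc :: "asg \<Rightarrow> bool list \<Rightarrow> nat" where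
  "anc Leaf cs = 0"
| "anc (Bin a b) cs =
     (let ca = take (nleaves a) cs; cb = drop (nleaves a) cs
      in if \<not> vtype b cb then nleaves a + anc b cb else anc a ca)"
| "anc (Ter a b c) cs =
     (let ca = take (nleaves a) cs; rest = drop (nleaves a) cs;
          cb = take (nleaves b) rest; cc = drop (nleaves b) rest
      in if \<not> vtype b cb \<and> \<not> vtype c cc
         then nleaves a + nleaves b + anc c cc else anc a ca)"
| "anc (MutX a) cs = anc a cs"
| "anc (MutO a) cs = anc a cs"

definition totrate :: "real \<Rightarrow> real \<Rightarrow> real \<Rightarrow> real \<Rightarrow> real \<Rightarrow> real" where
  "totrate s g u nu0 nu1 = s + g + u * nu1 + u * nu0"

text \<open>asg_prob s g u nu0 nu1 t r = P(a_r = t) for the embedded ASG started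
from a single root: the root leaf waits an exponential time with the total
rate, then performs the event creating the root's children, which evolve
independently for the remaining time.\<close>
primrec asg_prob :: "real \<Rightarrow> real \<Rightarrow> real \<Rightarrow> real \<Rightarrow> real \<Rightarrow> asg \<Rightarrow> real \<Rightarrow> real" where
  "asg_prob s g u nu0 nu1 Leaf r = exp (- totrate s g u nu0 nu1 * r)"
| "asg_prob s g u nu0 nu1 (Bin a b) r =
     integral {0..r} (\<lambda>\<tau>. s * exp (- totrate s g u nu0 nu1 * \<tau>)
        * asg_prob s g u nu0 nu1 a (r - \<tau>) * asg_prob s g u nu0 nu1 b (r - \<tau>))"
| "asg_prob s g u nu0 nu1 (Ter a b c) r =
     integral {0..r} (\<lambda>\<tau>. g * exp (- totrate s g u nu0 nu1 * \<tau>)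
        * asg_prob s g u nu0 nu1 a (r - \<tau>) * asg_prob s g u nu0 nu1 b (r - \<tau>)
        * asg_prob s g u nu0 nu1 c (r - \<tau>))"
| "asg_prob s g u nu0 nu1 (MutX a) r =
     integral {0..r} (\<lambda>\<tau>. u * nu1 * exp (- totrate s g u nu0 nu1 * \<tau>)
        * asg_prob s g u nu0 nu1 a (r - \<tau>))"
| "asg_prob s g u nu0 nu1 (MutO a) r =
     integral {0..r} (\<lambda>\<tau>. u * nu0 * exp (- totrate s g u nu0 nu1 * \<tau>)
        * asg_prob s g u nu0 nu1 a (r - \<tau>))"

definition anc_type1_prob :: "asg \<Rightarrow> real \<Rightarrow> real" where
  "anc_type1_prob t y0 =
     (\<Sum>cs\<in>{cs. length cs = nleaves t}.
        (\<Prod>i<nleaves t. if cs ! i then y0 else 1 - y0)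
        * (if cs ! anc t cs then 1 else 0))"

definition g_asg :: "real \<Rightarrow> real \<Rightarrow> real \<Rightarrow> real \<Rightarrow> real \<Rightarrow> real \<Rightarrow> real \<Rightarrow> real" where
  "g_asg s g u nu0 nu1 r y0 =
     infsum (\<lambda>t. asg_prob s g u nu0 nu1 t r * anc_type1_prob t y0) UNIV"

end

theory Submission
  imports Defs
begin

text \<open>
  Conditioning on the first event at the root, the recursion defining \<open>asg_prob\<close> becomes the
  variation-of-constants equation
  \<open>exp (\<Lambda> r) P(a\<^sub>r = t) = [t = Leaf] + \<integral>\<^sub>0\<^sup>r exp (\<Lambda> \<sigma>) inflow t \<sigma> d\<sigma>\<close> with
  \<open>\<Lambda> = s + \<gamma> + u\<close>, where \<open>inflow t \<sigma>\<close> is the rate of the root event of \<open>t\<close> times the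
  probabilities of its subtrees at time \<open>\<sigma>\<close>. Circle marks have rate \<open>u \<nu>\<^sub>0 = 0\<close>, so only
  circle-free trees carry mass, and on these an ancestral leaf of type 1 forces type 1 at the root.
  As the leaf types of different subtrees are independent, the probabilities that the root, resp.
  the ancestral leaf, has type 1 factor over the subtrees of the root. Summing the equation against
  these functionals therefore gives closed integral equations for the total mass \<open>M\<close> and for
  \<open>Y\<close> and \<open>G\<close>, the probabilities that root and ancestral leaf of \<open>a\<^sub>r\<close> have type 1. They are
  first obtained for the trees of bounded depth and then pass to the limit by monotone
  convergence. Differentiating, \<open>M = 1\<close>, \<open>Y\<close> solves the differential equation of \<open>y\<close>, and
  \<open>G' = - (1 - y) (s + \<gamma> (1 - y)) G\<close> with \<open>G 0 = y\<^sub>0\<close>; uniqueness for linear equations gives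
  the formula.
\<close>

section \<open>Expectations under independent leaf types\<close>

definition bernoulli_weight :: "real \<Rightarrow> bool list \<Rightarrow> real" where
  "bernoulli_weight p cs = prod_list (map (\<lambda>c. if c then p else 1 - p) cs)"

definition bernoulli_expect :: "real \<Rightarrow> nat \<Rightarrow> (bool list \<Rightarrow> real) \<Rightarrow> real" where
  "bernoulli_expect p n h = (\<Sum>cs | length cs = n. bernoulli_weight p cs * h cs)"

lemma bernoulli_weight_append:
  "bernoulli_weight p (xs @ ys) = bernoulli_weight p xs * bernoulli_weight p ys"
  by (simp add: bernoulli_weight_def)

lemma bernoulli_weight_nonneg: "p \<in> {0..1} \<Longrightarrow> 0 \<le> bernoulli_weight p cs"
  unfolding bernoulli_weight_def by (induction cs) auto

lemma bernoulli_expect_cong: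
  "(\<And>cs. length cs = n \<Longrightarrow> f cs = g cs) \<Longrightarrow> bernoulli_expect p n f = bernoulli_expect p n g"
  unfolding bernoulli_expect_def by (rule sum.cong) auto

lemma lists_of_length_add:
  "{cs. length cs = m + n} = (\<lambda>(xs, ys). xs @ ys) ` ({xs. length xs = m} \<times> {ys. length ys = n})"
proof (intro equalityI subsetI)
  fix cs :: "'a list" assume "cs \<in> {cs. length cs = m + n}"
  then show "cs \<in> (\<lambda>(xs, ys). xs @ ys) ` ({xs. length xs = m} \<times> {ys. length ys = n})"
    by (intro image_eqI[of _ _ "(take m cs, drop m cs)"]) auto
qed auto

lemma bernoulli_expect_length_add:
  "bernoulli_expect p (m + n) h =
     bernoulli_expect p m (\<lambda>xs. bernoulli_expect p n (\<lambda>ys. h (xs @ ys)))"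
proof -
  have inj: "inj_on (\<lambda>(xs, ys). xs @ ys) ({xs. length xs = m} \<times> {ys :: bool list. length ys = n})"
    by (auto simp: inj_on_def)
  have "bernoulli_expect p (m + n) h =
      (\<Sum>(xs, ys) \<in> {xs. length xs = m} \<times> {ys. length ys = n}.
         bernoulli_weight p (xs @ ys) * h (xs @ ys))"
    unfolding bernoulli_expect_def lists_of_length_add sum.reindex[OF inj]
    by (simp add: case_prod_beta)
  also have "\<dots> = bernoulli_expect p m (\<lambda>xs. bernoulli_expect p n (\<lambda>ys. h (xs @ ys)))"
    by (simp add: bernoulli_expect_def sum.cartesian_product[symmetric] bernoulli_weight_append
        sum_distrib_left mult.assoc)
  finally show ?thesis .
qed

lemma bernoulli_expect_one: "bernoulli_expect p n (\<lambda>_. 1) = 1"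
proof (induction n)
  case 0
  have "{cs :: bool list. length cs = 0} = {[]}" by auto
  then show ?case by (simp add: bernoulli_expect_def bernoulli_weight_def)
next
  case (Suc n)
  have "{cs :: bool list. length cs = 1} = {[True], [False]}"
    by (auto simp: length_Suc_conv)
  then have "bernoulli_expect p 1 (\<lambda>_. 1) = 1"
    by (simp add: bernoulli_expect_def bernoulli_weight_def)
  with Suc.IH show ?case
    using bernoulli_expect_length_add[of p 1 n "\<lambda>_. 1"] by simp
qed

lemma bernoulli_expect_const: "bernoulli_expect p n (\<lambda>_. c) = c"
  using bernoulli_expect_one[of p n]
  by (simp add: bernoulli_expect_def sum_distrib_right[symmetric])

lemma bernoulli_expect_cmult: "bernoulli_expect p n (\<lambda>cs. c * h cs) = c * bernoulli_expect p n h"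
  unfolding bernoulli_expect_def sum_distrib_left by (simp add: mult_ac)

lemma bernoulli_expect_multc: "bernoulli_expect p n (\<lambda>cs. h cs * c) = bernoulli_expect p n h * c"
  unfolding bernoulli_expect_def sum_distrib_right by (simp add: mult_ac)

lemma bernoulli_expect_diff:
  "bernoulli_expect p n (\<lambda>cs. f cs - g cs) = bernoulli_expect p n f - bernoulli_expect p n g"
  by (simp add: bernoulli_expect_def sum_subtractf algebra_simps)

lemma bernoulli_expect_bounded:
  assumes "p \<in> {0..1}" "\<And>cs. f cs \<in> {0..1}"
  shows "bernoulli_expect p n f \<in> {0..1}"
proof -
  have "0 \<le> bernoulli_expect p n f"
    unfolding bernoulli_expect_def using assms
    by (intro sum_nonneg mult_nonneg_nonneg bernoulli_weight_nonneg) auto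
  moreover have "bernoulli_expect p n f \<le> bernoulli_expect p n (\<lambda>_. 1)"
    unfolding bernoulli_expect_def using assms
    by (intro sum_mono mult_left_mono bernoulli_weight_nonneg) auto
  ultimately show ?thesis by (simp add: bernoulli_expect_one)
qed

lemma bernoulli_expect_add:
  "bernoulli_expect p n (\<lambda>cs. f cs + g cs) = bernoulli_expect p n f + bernoulli_expect p n g"
  by (simp add: bernoulli_expect_def sum.distrib algebra_simps)

lemma bernoulli_expect_append:
  assumes "\<And>xs ys. length xs = m \<Longrightarrow> length ys = n \<Longrightarrow> h (xs @ ys) = F xs ys"
  shows "bernoulli_expect p (m + n) h = bernoulli_expect p m (\<lambda>xs. bernoulli_expect p n (F xs))"
  unfolding bernoulli_expect_length_add using assms
  by (intro bernoulli_expect_cong) auto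

lemma bernoulli_expect_append3:
  assumes "\<And>xs ys zs. length xs = l \<Longrightarrow> length ys = m \<Longrightarrow> length zs = n \<Longrightarrow>
             h (xs @ ys @ zs) = F xs ys zs"
  shows "bernoulli_expect p (l + m + n) h =
           bernoulli_expect p l (\<lambda>xs. bernoulli_expect p m (\<lambda>ys. bernoulli_expect p n (F xs ys)))"
  unfolding add.assoc bernoulli_expect_length_add using assms
  by (intro bernoulli_expect_cong) auto

lemma bernoulli_expect_mult:
  "bernoulli_expect p m (\<lambda>xs. bernoulli_expect p n (\<lambda>ys. f xs * g ys)) =
     bernoulli_expect p m f * bernoulli_expect p n g"
  by (simp add: bernoulli_expect_cmult bernoulli_expect_multc)

lemma bernoulli_expect_mult_or:
  "bernoulli_expect p l (\<lambda>xs. bernoulli_expect p m (\<lambda>ys. bernoulli_expect p n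
       (\<lambda>zs. f xs * (1 - (1 - g ys) * (1 - h zs))))) =
     bernoulli_expect p l f * (1 - (1 - bernoulli_expect p m g) * (1 - bernoulli_expect p n h))"
  by (simp add: algebra_simps bernoulli_expect_add bernoulli_expect_diff bernoulli_expect_cmult
      bernoulli_expect_multc bernoulli_expect_const)

section \<open>Types of the root and of the ancestral leaf\<close>

primrec circle_free :: "asg \<Rightarrow> bool" where
  "circle_free Leaf = True"
| "circle_free (Bin a b) = (circle_free a \<and> circle_free b)"
| "circle_free (Ter a b c) = (circle_free a \<and> circle_free b \<and> circle_free c)"
| "circle_free (MutX a) = circle_free a"
| "circle_free (MutO a) = False"

lemma anc_Bin_append:
  "length xs = nleaves a \<Longrightarrow>
     anc (Bin a b) (xs @ ys) = (if vtype b ys then anc a xs else nleaves a + anc b ys)"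
  by (simp add: Let_def)

lemma vtype_Ter_append:
  "length xs = nleaves a \<Longrightarrow> length ys = nleaves b \<Longrightarrow>
     vtype (Ter a b c) (xs @ ys @ zs) = (vtype a xs \<and> (vtype b ys \<or> vtype c zs))"
  by (simp add: Let_def)

lemma anc_Ter_append:
  "length xs = nleaves a \<Longrightarrow> length ys = nleaves b \<Longrightarrow>
     anc (Ter a b c) (xs @ ys @ zs) =
       (if \<not> vtype b ys \<and> \<not> vtype c zs then nleaves a + nleaves b + anc c zs else anc a xs)"
  by (simp add: Let_def)

lemma anc_less_nleaves: "length cs = nleaves t \<Longrightarrow> anc t cs < nleaves t"
proof (induction t arbitrary: cs)
  case (Bin a b)
  then have "anc a (take (nleaves a) cs) < nleaves a" "anc b (drop (nleaves a) cs) < nleaves b"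
    by simp_all
  then show ?case by (auto simp: Let_def)
next
  case (Ter a b c)
  then have "anc a (take (nleaves a) cs) < nleaves a"
    "anc c (drop (nleaves b) (drop (nleaves a) cs)) < nleaves c"
    by simp_all
  then show ?case by (auto simp: Let_def)
qed simp_all

lemma length_eq_add_append:
  assumes "length cs = m + n"
  obtains xs ys where "cs = xs @ ys" "length xs = m" "length ys = n"
  using assms by (intro that[of "take m cs" "drop m cs"]) auto

text \<open>On the path from a vertex to its ancestral leaf, every unmarked vertex has the type of its
  successor on the path and every marked vertex the type of its mark.\<close>
lemma vtype_if_anc_type1:
  assumes "circle_free t" "length cs = nleaves t" "cs ! anc t cs"
  shows "vtype t cs"
  using assms
proof (induction t arbitrary: cs)
  case Leaf
  then show ?case by (cases cs) auto
next
  case (Bin a b)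
  then obtain xs ys where cs: "cs = xs @ ys" "length xs = nleaves a" "length ys = nleaves b"
    by (auto elim: length_eq_add_append)
  show ?case
  proof (cases "vtype b ys")
    case True
    with Bin.prems cs have "xs ! anc a xs"
      by (simp add: anc_Bin_append nth_append anc_less_nleaves)
    with Bin.IH(1) Bin.prems cs True show ?thesis by simp
  next
    case False
    with Bin.prems cs have "ys ! anc b ys" by (simp add: anc_Bin_append nth_append)
    with Bin.IH(2) Bin.prems cs False show ?thesis by simp
  qed
next
  case (Ter a b c)
  then obtain xs ys zs where cs: "cs = xs @ ys @ zs"
    "length xs = nleaves a" "length ys = nleaves b" "length zs = nleaves c"
    by (auto elim!: length_eq_add_append[where m = "nleaves a + nleaves b"]
        length_eq_add_append[where m = "nleaves a"])
  show ?case
  proof (cases "\<not> vtype b ys \<and> \<not> vtype c zs")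
    case True
    with Ter.prems cs have "zs ! anc c zs" by (simp add: anc_Ter_append nth_append)
    with Ter.IH(3) Ter.prems cs True show ?thesis by simp
  next
    case False
    with Ter.prems cs have "xs ! anc a xs"
      by (simp add: anc_Ter_append nth_append anc_less_nleaves)
    with Ter.IH(1) Ter.prems cs False show ?thesis by (auto simp: vtype_Ter_append)
  qed
qed simp_all

definition root_type1_prob :: "asg \<Rightarrow> real \<Rightarrow> real" where
  "root_type1_prob t p = bernoulli_expect p (nleaves t) (\<lambda>cs. of_bool (vtype t cs))"

lemma anc_type1_prob_altdef:
  "anc_type1_prob t p = bernoulli_expect p (nleaves t) (\<lambda>cs. of_bool (cs ! anc t cs))"
proof -
  have weight: "(\<Prod>i<length cs. if cs ! i then p else 1 - p) = bernoulli_weight p cs" for cs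
    unfolding bernoulli_weight_def
    by (induction cs) (simp_all add: prod.lessThan_Suc_shift del: prod.lessThan_Suc)
  show ?thesis
    unfolding anc_type1_prob_def bernoulli_expect_def
    by (intro sum.cong) (auto simp flip: weight)
qed

lemma root_type1_prob_bounded: "p \<in> {0..1} \<Longrightarrow> root_type1_prob t p \<in> {0..1}"
  unfolding root_type1_prob_def by (rule bernoulli_expect_bounded) auto

lemma anc_type1_prob_bounded: "p \<in> {0..1} \<Longrightarrow> anc_type1_prob t p \<in> {0..1}"
  unfolding anc_type1_prob_altdef by (rule bernoulli_expect_bounded) auto

lemma root_type1_prob_Leaf: "root_type1_prob Leaf p = p"
  and anc_type1_prob_Leaf: "anc_type1_prob Leaf p = p"
proof -
  have "{cs :: bool list. length cs = 1} = {[True], [False]}"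
    by (auto simp: length_Suc_conv)
  then show "root_type1_prob Leaf p = p" "anc_type1_prob Leaf p = p"
    by (simp_all add: root_type1_prob_def anc_type1_prob_altdef bernoulli_expect_def
        bernoulli_weight_def)
qed

lemma root_type1_prob_MutX: "root_type1_prob (MutX a) p = 1"
  by (simp add: root_type1_prob_def bernoulli_expect_const)

lemma anc_type1_prob_MutX: "anc_type1_prob (MutX a) p = anc_type1_prob a p"
  by (simp add: anc_type1_prob_altdef)

lemma root_type1_prob_Bin:
  "root_type1_prob (Bin a b) p = root_type1_prob a p * root_type1_prob b p"
  unfolding root_type1_prob_def nleaves.simps
  by (subst bernoulli_expect_append[where
        F = "\<lambda>xs ys. of_bool (vtype a xs) * of_bool (vtype b ys)"])
    (simp_all add: bernoulli_expect_mult)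

lemma anc_type1_prob_Bin:
  assumes "circle_free b"
  shows "anc_type1_prob (Bin a b) p = anc_type1_prob a p * root_type1_prob b p"
  unfolding anc_type1_prob_altdef root_type1_prob_def nleaves.simps
proof (subst bernoulli_expect_append[where
      F = "\<lambda>xs ys. of_bool (xs ! anc a xs) * of_bool (vtype b ys)"])
  fix xs ys :: "bool list" assume "length xs = nleaves a" "length ys = nleaves b"
  then show "of_bool ((xs @ ys) ! anc (Bin a b) (xs @ ys)) = (of_bool (xs ! anc a xs) *
      of_bool (vtype b ys) :: real)"
    using vtype_if_anc_type1[OF assms, of ys]
    by (auto simp: anc_Bin_append nth_append anc_less_nleaves)
qed (simp add: bernoulli_expect_mult)

lemma root_type1_prob_Ter:
  "root_type1_prob (Ter a b c) p =
     root_type1_prob a p * (1 - (1 - root_type1_prob b p) * (1 - root_type1_prob c p))"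
  unfolding root_type1_prob_def nleaves.simps
  by (subst bernoulli_expect_append3[where F = "\<lambda>xs ys zs. of_bool (vtype a xs) *
      (1 - (1 - of_bool (vtype b ys)) * (1 - of_bool (vtype c zs)))"])
    (simp_all add: vtype_Ter_append bernoulli_expect_mult_or)

lemma anc_type1_prob_Ter:
  assumes "circle_free c"
  shows "anc_type1_prob (Ter a b c) p =
     anc_type1_prob a p * (1 - (1 - root_type1_prob b p) * (1 - root_type1_prob c p))"
  unfolding anc_type1_prob_altdef root_type1_prob_def nleaves.simps
proof (subst bernoulli_expect_append3[where F = "\<lambda>xs ys zs. of_bool (xs ! anc a xs) *
      (1 - (1 - of_bool (vtype b ys)) * (1 - of_bool (vtype c zs)))"])
  fix xs ys zs :: "bool list"
  assume "length xs = nleaves a" "length ys = nleaves b" "length zs = nleaves c"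
  then show "of_bool ((xs @ ys @ zs) ! anc (Ter a b c) (xs @ ys @ zs)) = (of_bool (xs ! anc a xs) *
      (1 - (1 - of_bool (vtype b ys)) * (1 - of_bool (vtype c zs))) :: real)"
    using vtype_if_anc_type1[OF assms, of zs]
    by (auto simp: anc_Ter_append nth_append anc_less_nleaves)
qed (simp add: bernoulli_expect_mult_or)

section \<open>Integral equations\<close>

lemma integral_reflect_Icc:
  fixes F :: "real \<Rightarrow> real"
  shows "integral {0..r} (\<lambda>\<tau>. F (r - \<tau>)) = integral {0..r} F"
proof -
  have "integral {0..r} (\<lambda>\<tau>. F (r - \<tau>)) = integral {-r..0} (F \<circ> (+) r)"
    using Henstock_Kurzweil_Integration.integral_reflect_real[of 0 "-r" "F \<circ> (+) r"]
    by (simp add: o_def)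
  also have "\<dots> = integral {0..r} F"
    by (simp add: integral_shift_Icc_real)
  finally show ?thesis .
qed

lemma integral_exp_convolution:
  fixes k :: "real \<Rightarrow> real"
  shows "integral {0..r} (\<lambda>\<tau>. exp (- l * \<tau>) * k (r - \<tau>)) =
           exp (- l * r) * integral {0..r} (\<lambda>\<sigma>. exp (l * \<sigma>) * k \<sigma>)"
proof -
  have "exp (- l * \<tau>) * k (r - \<tau>) = exp (- l * r) * (exp (l * (r - \<tau>)) * k (r - \<tau>))" for \<tau>
    by (simp add: mult.assoc[symmetric] mult_exp_exp right_diff_distrib)
  then have "integral {0..r} (\<lambda>\<tau>. exp (- l * \<tau>) * k (r - \<tau>)) =
      exp (- l * r) * integral {0..r} (\<lambda>\<tau>. exp (l * (r - \<tau>)) * k (r - \<tau>))"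
    by (simp only: integral_mult_right)
  then show ?thesis
    by (simp only: integral_reflect_Icc[where F = "\<lambda>\<sigma>. exp (l * \<sigma>) * k \<sigma>"])
qed

lemma exp_mult_eq_iff:
  fixes l x z c :: real
  shows "exp (l * x) * z = c \<longleftrightarrow> z = exp (- l * x) * c"
  by (auto simp: exp_minus field_simps)

lemma continuous_on_integral_equation:
  fixes Z f :: "real \<Rightarrow> real"
  assumes "\<And>\<rho>. \<rho> \<in> {0..R} \<Longrightarrow> exp (l * \<rho>) * Z \<rho> = a + integral {0..\<rho>} f"
    and "f integrable_on {0..R}"
  shows "continuous_on {0..R} Z"
proof -
  have "continuous_on {0..R} (\<lambda>\<rho>. exp (- l * \<rho>) * (a + integral {0..\<rho>} f))"
    by (intro continuous_intros indefinite_integral_continuous_1 assms(2))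
  then show ?thesis
  proof (rule continuous_on_eq)
    fix x assume "x \<in> {0..R}"
    from iffD1[OF exp_mult_eq_iff assms(1)[OF this]]
    show "exp (- l * x) * (a + integral {0..x} f) = Z x" by simp
  qed
qed

lemma has_real_derivative_integral_equation:
  fixes Z h :: "real \<Rightarrow> real"
  assumes eq: "\<And>\<rho>. \<rho> \<in> {0..R} \<Longrightarrow>
               exp (l * \<rho>) * Z \<rho> = a + integral {0..\<rho>} (\<lambda>\<sigma>. exp (l * \<sigma>) * h \<sigma>)"
    and h: "continuous_on {0..R} h" and \<rho>: "\<rho> \<in> {0..R}"
  shows "(Z has_real_derivative (- l * Z \<rho> + h \<rho>)) (at \<rho> within {0..R})"
proof -
  define V where "V x = exp (- l * x) * (a + integral {0..x} (\<lambda>\<sigma>. exp (l * \<sigma>) * h \<sigma>))" for x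
  have Z: "Z x = V x" if "x \<in> {0..R}" for x
    unfolding V_def by (rule iffD1[OF exp_mult_eq_iff eq[OF that]])
  have "continuous_on {0..R} (\<lambda>\<sigma>. exp (l * \<sigma>) * h \<sigma>)"
    by (intro continuous_intros h)
  from integral_has_real_derivative[OF this \<rho>]
  have "(V has_real_derivative
          exp (- l * \<rho>) * (- l) * (a + integral {0..\<rho>} (\<lambda>\<sigma>. exp (l * \<sigma>) * h \<sigma>))
          + exp (- l * \<rho>) * (exp (l * \<rho>) * h \<rho>)) (at \<rho> within {0..R})"
    unfolding V_def by (auto intro!: derivative_eq_intros)
  moreover have "exp (- l * \<rho>) * (- l) * (a + integral {0..\<rho>} (\<lambda>\<sigma>. exp (l * \<sigma>) * h \<sigma>))
      + exp (- l * \<rho>) * (exp (l * \<rho>) * h \<rho>) = - l * V \<rho> + h \<rho>"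
    by (simp add: V_def exp_minus field_simps)
  ultimately have "(V has_real_derivative (- l * Z \<rho> + h \<rho>)) (at \<rho> within {0..R})"
    using Z[OF \<rho>] by simp
  then show ?thesis
    by (rule has_field_derivative_transform_within[OF _ zero_less_one \<rho>]) (simp add: Z)
qed

lemma linear_ode_zero:
  fixes D q :: "real \<Rightarrow> real"
  assumes deriv: "\<And>x. x \<in> {0..R} \<Longrightarrow> (D has_real_derivative q x * D x) (at x within {0..R})"
    and q: "continuous_on {0..R} q" and "D 0 = 0" and x: "x \<in> {0..R}"
  shows "D x = 0"
proof -
  define W where "W x = D x * exp (- integral {0..x} q)" for x
  have "(W has_real_derivative 0) (at x within {0..R})" if "x \<in> {0..R}" for x
  proof -
    from integral_has_real_derivative[OF q that]
    have "(W has_real_derivative q x * D x * exp (- integral {0..x} q)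
            + D x * (exp (- integral {0..x} q) * - q x)) (at x within {0..R})"
      unfolding W_def by (auto intro!: derivative_eq_intros deriv[OF that])
    then show ?thesis by (simp add: algebra_simps)
  qed
  then obtain c where "\<forall>x\<in>{0..R}. W x = c"
    using has_field_derivative_zero_constant[of "{0..R}" W] by auto
  moreover have "W 0 = 0" by (simp add: W_def \<open>D 0 = 0\<close>)
  ultimately have "W x = 0" using x by auto
  then show ?thesis by (simp add: W_def)
qed

lemma limit_of_integral_equations:
  fixes f :: "nat \<Rightarrow> real \<Rightarrow> real"
  assumes eq: "\<And>n. C (Suc n) = a + integral {0..r} (f n)"
    and int: "\<And>n. f n integrable_on {0..r}"
    and mono: "\<And>n x. x \<in> {0..r} \<Longrightarrow> f n x \<le> f (Suc n) x"
    and bound: "\<And>n x. x \<in> {0..r} \<Longrightarrow> 0 \<le> f n x \<and> f n x \<le> K"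
    and lim: "\<And>x. x \<in> {0..r} \<Longrightarrow> (\<lambda>n. f n x) \<longlonglongrightarrow> F x"
    and C: "C \<longlonglongrightarrow> c"
  shows "c = a + integral {0..r} F" and "F integrable_on {0..r}"
proof -
  have "\<bar>integral {0..r} (f n)\<bar> \<le> integral {0..r} (\<lambda>_. K)" for n
  proof -
    have "0 \<le> integral {0..r} (f n)"
      using int bound by (intro integral_nonneg) auto
    moreover have "integral {0..r} (f n) \<le> integral {0..r} (\<lambda>_. K)"
      using int bound by (intro integral_le) auto
    ultimately show ?thesis by simp
  qed
  then have "bounded (range (\<lambda>n. integral {0..r} (f n)))"
    unfolding bounded_iff by (auto simp del: integral_const_real)
  from monotone_convergence_increasing[OF int mono lim this]
  have F: "F integrable_on {0..r}" "(\<lambda>n. integral {0..r} (f n)) \<longlonglongrightarrow> integral {0..r} F"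
    by auto
  have "(\<lambda>n. C (Suc n)) \<longlonglongrightarrow> a + integral {0..r} F"
    unfolding eq by (intro tendsto_intros F(2))
  with LIMSEQ_Suc[OF C] show "c = a + integral {0..r} F"
    by (rule LIMSEQ_unique)
  show "F integrable_on {0..r}" by (fact F(1))
qed

lemma finite_subset_Union_incseq:
  assumes "incseq A" "finite X" "X \<subseteq> (\<Union>n. A n)"
  obtains n where "X \<subseteq> A n"
proof (rule finite_subset_Union_chain[OF assms(2,3)])
  show "range A \<noteq> {}" by simp
  have "A m \<subseteq> A n \<or> A n \<subseteq> A m" for m n
    using incseqD[OF assms(1)] nat_le_linear by metis
  then show "subset.chain UNIV (range A)"
    unfolding subset.chain_def by blast
qed auto

lemma infsum_tendsto_exhausting:
  fixes f :: "'a \<Rightarrow> real"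
  assumes "incseq A" "\<And>n. finite (A n)" "\<And>t. f t \<noteq> 0 \<Longrightarrow> t \<in> (\<Union>n. A n)"
    and "\<And>t. 0 \<le> f t" and "\<And>n. sum f (A n) \<le> B"
  shows "(\<lambda>n. sum f (A n)) \<longlonglongrightarrow> infsum f UNIV"
proof -
  define S where "S = (\<Union>n. A n)"
  have exhaust: "\<exists>n. X \<subseteq> A n" if "finite X" "X \<subseteq> S" for X
    using finite_subset_Union_incseq[OF assms(1) that[unfolded S_def]] by blast
  have "f summable_on S"
  proof (rule nonneg_bdd_above_summable_on)
    show "bdd_above (sum f ` {X. X \<subseteq> S \<and> finite X})"
    proof (rule bdd_aboveI2)
      fix X assume "X \<in> {X. X \<subseteq> S \<and> finite X}"
      then obtain n where "X \<subseteq> A n" using exhaust by blast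
      with assms(2,4) have "sum f X \<le> sum f (A n)" by (intro sum_mono2) auto
      with assms(5)[of n] show "sum f X \<le> B" by linarith
    qed
  qed (use assms(4) in auto)
  then have "(sum f \<longlongrightarrow> infsum f S) (finite_subsets_at_top S)"
    by (simp add: has_sum_def[symmetric])
  moreover have "filterlim A (finite_subsets_at_top S) sequentially"
    unfolding filterlim_finite_subsets_at_top eventually_sequentially
  proof (intro allI impI)
    fix X assume "finite X \<and> X \<subseteq> S"
    with exhaust obtain N where "X \<subseteq> A N" by blast
    then have "\<forall>n\<ge>N. X \<subseteq> A n"
      using incseqD[OF assms(1)] by blast
    with assms(2) show "\<exists>N. \<forall>n\<ge>N. finite (A n) \<and> X \<subseteq> A n \<and> A n \<subseteq> S"
      by (auto simp: S_def)
  qed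
  ultimately have "(\<lambda>n. sum f (A n)) \<longlonglongrightarrow> infsum f S"
    by (rule filterlim_compose)
  moreover have "infsum f S = infsum f UNIV"
    by (rule infsum_cong_neutral) (use assms(3) in \<open>auto simp: S_def\<close>)
  ultimately show ?thesis by (simp only:)
qed

section \<open>Trees of bounded depth\<close>

fun trees :: "nat \<Rightarrow> asg set" where
  "trees 0 = {}"
| "trees (Suc n) = insert Leaf ((\<lambda>(a, b). Bin a b) ` (trees n \<times> trees n)
     \<union> (\<lambda>(a, b, c). Ter a b c) ` (trees n \<times> trees n \<times> trees n) \<union> MutX ` trees n)"

lemma finite_trees: "finite (trees n)"
  by (induction n) auto

lemma incseq_trees: "incseq trees"
proof (rule incseq_SucI)
  show "trees n \<subseteq> trees (Suc n)" for n
  proof (induction n)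
    case (Suc n)
    then show ?case
      by (simp only: trees.simps(2)) (intro insert_mono Un_mono image_mono Sigma_mono; blast)
  qed simp
qed

lemma circle_free_if_in_trees: "t \<in> trees n \<Longrightarrow> circle_free t"
  by (induction n arbitrary: t) auto

lemma in_trees_if_circle_free: "circle_free t \<Longrightarrow> \<exists>n. t \<in> trees n"
proof (induction t)
  case Leaf
  have "Leaf \<in> trees 1" by simp
  then show ?case by blast
next
  case (Bin a b)
  then obtain m n where "a \<in> trees m" "b \<in> trees n" by auto
  moreover have "trees m \<subseteq> trees (max m n)" "trees n \<subseteq> trees (max m n)"
    using incseq_trees by (simp_all add: incseqD)
  ultimately have "a \<in> trees (max m n)" "b \<in> trees (max m n)" by auto
  then have "Bin a b \<in> trees (Suc (max m n))" by force
  then show ?case by blast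
next
  case (Ter a b c)
  then obtain l m n where "a \<in> trees l" "b \<in> trees m" "c \<in> trees n" by auto
  moreover have "trees l \<subseteq> trees (l + m + n)" "trees m \<subseteq> trees (l + m + n)"
    "trees n \<subseteq> trees (l + m + n)"
    using incseq_trees by (simp_all add: incseqD)
  ultimately have "a \<in> trees (l + m + n)" "b \<in> trees (l + m + n)" "c \<in> trees (l + m + n)"
    by auto
  then have "Ter a b c \<in> trees (Suc (l + m + n))" by force
  then show ?case by blast
next
  case (MutX a)
  then obtain n where "a \<in> trees n" by auto
  then have "MutX a \<in> trees (Suc n)" by simp
  then show ?case by blast
qed simp

lemma sum_trees_Suc:
  "sum f (trees (Suc n)) = f Leaf + (\<Sum>(a, b) \<in> trees n \<times> trees n. f (Bin a b))
     + (\<Sum>(a, b, c) \<in> trees n \<times> trees n \<times> trees n. f (Ter a b c)) + (\<Sum>a \<in> trees n. f (MutX a))"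
proof -
  define B where "B = (\<lambda>(a, b). Bin a b) ` (trees n \<times> trees n)"
  define C where "C = (\<lambda>(a, b, c). Ter a b c) ` (trees n \<times> trees n \<times> trees n)"
  define D where "D = MutX ` trees n"
  have finite: "finite B" "finite C" "finite D"
    by (simp_all add: B_def C_def D_def finite_trees)
  have disjoint: "Leaf \<notin> B \<union> C \<union> D" "B \<inter> C = {}" "(B \<union> C) \<inter> D = {}"
    by (auto simp: B_def C_def D_def)
  have inj: "inj_on (\<lambda>(a, b). Bin a b) X" "inj_on (\<lambda>(a, b, c). Ter a b c) Y" "inj_on MutX Z"
    for X Y Z by (auto simp: inj_on_def)
  have "trees (Suc n) = insert Leaf (B \<union> C \<union> D)"
    by (simp add: B_def C_def D_def)
  then have "sum f (trees (Suc n)) = f Leaf + sum f B + sum f C + sum f D"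
    using finite disjoint by (simp add: sum.union_disjoint add.assoc)
  also have "sum f B = (\<Sum>(a, b) \<in> trees n \<times> trees n. f (Bin a b))"
    unfolding B_def sum.reindex[OF inj(1)] by (simp add: o_def split_def)
  also have "sum f C = (\<Sum>(a, b, c) \<in> trees n \<times> trees n \<times> trees n. f (Ter a b c))"
    unfolding C_def sum.reindex[OF inj(2)] by (simp add: o_def split_def)
  also have "sum f D = (\<Sum>a \<in> trees n. f (MutX a))"
    unfolding D_def sum.reindex[OF inj(3)] by simp
  finally show ?thesis .
qed

lemma sum_product_Times:
  fixes f :: "'a \<Rightarrow> 'c :: comm_semiring_0" and g :: "'b \<Rightarrow> 'c"
  shows "(\<Sum>(a, b) \<in> A \<times> B. f a * g b) = sum f A * sum g B"
  by (simp add: sum_product sum.cartesian_product)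

lemma sum_Times_or:
  fixes w \<beta> :: "'a \<Rightarrow> real"
  shows "(\<Sum>(b, c) \<in> A \<times> A. w b * w c * (1 - (1 - \<beta> b) * (1 - \<beta> c))) =
           sum w A ^ 2 - (sum w A - (\<Sum>b\<in>A. w b * \<beta> b)) ^ 2"
proof -
  have "(\<Sum>(b, c) \<in> A \<times> A. w b * w c * (1 - (1 - \<beta> b) * (1 - \<beta> c))) =
      (\<Sum>(b, c) \<in> A \<times> A. w b * w c)
      - (\<Sum>(b, c) \<in> A \<times> A. (w b * (1 - \<beta> b)) * (w c * (1 - \<beta> c)))"
    by (simp add: sum_subtractf[symmetric] case_prod_beta algebra_simps)
  also have "\<dots> = sum w A ^ 2 - (\<Sum>b\<in>A. w b * (1 - \<beta> b)) ^ 2"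
    by (simp only: sum_product_Times power2_eq_square)
  also have "(\<Sum>b\<in>A. w b * (1 - \<beta> b)) = sum w A - (\<Sum>b\<in>A. w b * \<beta> b)"
    by (simp add: sum_subtractf right_diff_distrib)
  finally show ?thesis .
qed

definition branching_rule ::
    "(asg \<Rightarrow> real) \<Rightarrow> (asg \<Rightarrow> real) \<Rightarrow> (asg \<Rightarrow> real) \<Rightarrow> (asg \<Rightarrow> real) \<Rightarrow> bool" where
  "branching_rule \<phi> \<alpha> \<beta> \<delta> \<longleftrightarrow>
     range \<phi> \<subseteq> {0..1} \<and> range \<alpha> \<subseteq> {0..1} \<and> range \<beta> \<subseteq> {0..1} \<and> range \<delta> \<subseteq> {0..1} \<and>
     (\<forall>a b. circle_free b \<longrightarrow> \<phi> (Bin a b) = \<alpha> a * \<beta> b) \<and>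
     (\<forall>a b c. circle_free c \<longrightarrow> \<phi> (Ter a b c) = \<alpha> a * (1 - (1 - \<beta> b) * (1 - \<beta> c))) \<and>
     (\<forall>a. \<phi> (MutX a) = \<delta> a)"

lemma branching_rule_one: "branching_rule (\<lambda>_. 1) (\<lambda>_. 1) (\<lambda>_. 1) (\<lambda>_. 1)"
  by (auto simp: branching_rule_def)

lemma branching_rule_root_type1:
  assumes "p \<in> {0..1}"
  shows "branching_rule (\<lambda>t. root_type1_prob t p) (\<lambda>t. root_type1_prob t p)
           (\<lambda>t. root_type1_prob t p) (\<lambda>_. 1)"
  using root_type1_prob_bounded[OF assms]
  by (auto simp: branching_rule_def root_type1_prob_Bin root_type1_prob_Ter root_type1_prob_MutX)

lemma branching_rule_anc_type1:
  assumes "p \<in> {0..1}"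
  shows "branching_rule (\<lambda>t. anc_type1_prob t p) (\<lambda>t. anc_type1_prob t p)
           (\<lambda>t. root_type1_prob t p) (\<lambda>t. anc_type1_prob t p)"
  using root_type1_prob_bounded[OF assms] anc_type1_prob_bounded[OF assms]
  by (auto simp: branching_rule_def anc_type1_prob_Bin anc_type1_prob_Ter anc_type1_prob_MutX)

lemma integral_exp_mult_self:
  fixes l r :: real
  assumes "0 \<le> r"
  shows "integral {0..r} (\<lambda>\<sigma>. exp (l * \<sigma>) * l) = exp (l * r) - 1"
proof -
  have "((\<lambda>\<sigma>. exp (l * \<sigma>) * l) has_integral exp (l * r) - exp (l * 0)) {0..r}"
    using assms by (intro fundamental_theorem_of_calculus)
      (auto intro!: derivative_eq_intros simp flip: has_real_derivative_iff_has_vector_derivative)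
  from integral_unique[OF this] show ?thesis by simp
qed

section \<open>The law of the embedded ASG\<close>

locale asg_rates =
  fixes s g u :: real
  assumes s_nonneg: "0 \<le> s" and g_nonneg: "0 \<le> g" and u_nonneg: "0 \<le> u"
begin

abbreviation "\<Lambda> \<equiv> s + g + u"

abbreviation prob :: "asg \<Rightarrow> real \<Rightarrow> real" where
  "prob t r \<equiv> asg_prob s g u 0 1 t r"

fun inflow :: "asg \<Rightarrow> real \<Rightarrow> real" where
  "inflow Leaf x = 0"
| "inflow (Bin a b) x = s * prob a x * prob b x"
| "inflow (Ter a b c) x = g * prob a x * prob b x * prob c x"
| "inflow (MutX a) x = u * prob a x"
| "inflow (MutO a) x = 0"

lemma asg_prob_integral_equation:
  "exp (\<Lambda> * r) * prob t r = of_bool (t = Leaf) + integral {0..r} (\<lambda>\<sigma>. exp (\<Lambda> * \<sigma>) * inflow t \<sigma>)"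
proof (cases "t = Leaf")
  case True
  then show ?thesis by (simp add: totrate_def algebra_simps flip: exp_add)
next
  case False
  then have "prob t r = integral {0..r} (\<lambda>\<tau>. exp (- \<Lambda> * \<tau>) * inflow t (r - \<tau>))"
    by (cases t) (simp_all add: totrate_def mult_ac)
  also have "\<dots> = exp (- \<Lambda> * r) * integral {0..r} (\<lambda>\<sigma>. exp (\<Lambda> * \<sigma>) * inflow t \<sigma>)"
    by (rule integral_exp_convolution)
  finally show ?thesis
    using False by (subst exp_mult_eq_iff) simp
qed

lemma continuous_on_asg_prob_if_inflow:
  "continuous_on {0..R} (inflow t) \<Longrightarrow> continuous_on {0..R} (prob t)"
  by (intro continuous_on_integral_equation[OF asg_prob_integral_equation]
      integrable_continuous_real continuous_intros)

lemma continuous_on_asg_prob: "continuous_on {0..R} (prob t)"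
  by (induction t)
    (simp_all add: continuous_on_asg_prob_if_inflow continuous_on_mult del: asg_prob.simps)

lemma continuous_on_inflow: "continuous_on {0..R} (inflow t)"
  by (cases t) (simp_all add: continuous_on_mult continuous_on_asg_prob del: asg_prob.simps)

lemma asg_prob_nonneg_if_inflow:
  assumes "\<And>\<sigma>. \<sigma> \<in> {0..r} \<Longrightarrow> 0 \<le> inflow t \<sigma>"
  shows "0 \<le> prob t r"
proof -
  have "0 \<le> integral {0..r} (\<lambda>\<sigma>. exp (\<Lambda> * \<sigma>) * inflow t \<sigma>)"
    using assms
    by (intro integral_nonneg integrable_continuous_real continuous_intros continuous_on_inflow)
      auto
  then have "0 \<le> exp (\<Lambda> * r) * prob t r"
    by (simp only: asg_prob_integral_equation) simp
  then show ?thesis by (simp only: zero_le_mult_iff) auto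
qed

lemma asg_prob_nonneg: "0 \<le> r \<Longrightarrow> 0 \<le> prob t r"
proof (induction t arbitrary: r)
  case (Bin a b)
  then show ?case
    using s_nonneg by (intro asg_prob_nonneg_if_inflow) (simp del: asg_prob.simps)
next
  case (Ter a b c)
  then show ?case
    using g_nonneg by (intro asg_prob_nonneg_if_inflow) (simp del: asg_prob.simps)
next
  case (MutX a)
  then show ?case
    using u_nonneg by (intro asg_prob_nonneg_if_inflow) (simp del: asg_prob.simps)
qed simp_all

lemma inflow_nonneg: "0 \<le> \<sigma> \<Longrightarrow> 0 \<le> inflow t \<sigma>"
  by (cases t) (simp_all add: asg_prob_nonneg s_nonneg g_nonneg u_nonneg)

lemma asg_prob_eq_0_if_not_circle_free: "\<not> circle_free t \<Longrightarrow> prob t r = 0"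
  by (induction t arbitrary: r) auto

definition expect_on :: "asg set \<Rightarrow> (asg \<Rightarrow> real) \<Rightarrow> real \<Rightarrow> real" where
  "expect_on A \<phi> \<sigma> = (\<Sum>t\<in>A. prob t \<sigma> * \<phi> t)"

definition expect :: "(asg \<Rightarrow> real) \<Rightarrow> real \<Rightarrow> real" where
  "expect \<phi> \<sigma> = infsum (\<lambda>t. prob t \<sigma> * \<phi> t) UNIV"

definition branching_inflow ::
    "((asg \<Rightarrow> real) \<Rightarrow> real) \<Rightarrow> (asg \<Rightarrow> real) \<Rightarrow> (asg \<Rightarrow> real) \<Rightarrow> (asg \<Rightarrow> real) \<Rightarrow> real" where
  "branching_inflow E \<alpha> \<beta> \<delta> =
     s * E \<alpha> * E \<beta> + g * E \<alpha> * (E (\<lambda>_. 1) ^ 2 - (E (\<lambda>_. 1) - E \<beta>) ^ 2) + u * E \<delta>"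

lemma expect_on_trees_integral_equation:
  "exp (\<Lambda> * r) * expect_on (trees (Suc n)) \<phi> r =
     \<phi> Leaf + integral {0..r} (\<lambda>\<sigma>. exp (\<Lambda> * \<sigma>) * (\<Sum>t\<in>trees (Suc n). inflow t \<sigma> * \<phi> t))"
proof -
  have integrable: "(\<lambda>\<sigma>. exp (\<Lambda> * \<sigma>) * inflow t \<sigma> * \<phi> t) integrable_on {0..r}" for t
    by (intro integrable_continuous_real continuous_intros continuous_on_inflow)
  have "exp (\<Lambda> * r) * prob t r * \<phi> t =
      of_bool (t = Leaf) * \<phi> t + integral {0..r} (\<lambda>\<sigma>. exp (\<Lambda> * \<sigma>) * inflow t \<sigma> * \<phi> t)" for t
    unfolding integral_mult_left asg_prob_integral_equation by (rule distrib_right)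
  moreover have "(\<Sum>t\<in>trees (Suc n). of_bool (t = Leaf) * \<phi> t) = \<phi> Leaf"
    by (subst sum_trees_Suc) simp
  ultimately have "exp (\<Lambda> * r) * expect_on (trees (Suc n)) \<phi> r = \<phi> Leaf
      + (\<Sum>t\<in>trees (Suc n). integral {0..r} (\<lambda>\<sigma>. exp (\<Lambda> * \<sigma>) * inflow t \<sigma> * \<phi> t))"
    by (simp add: expect_on_def sum_distrib_left mult.assoc[symmetric] sum.distrib
        del: asg_prob.simps trees.simps)
  also have "\<dots> = \<phi> Leaf + integral {0..r} (\<lambda>\<sigma>.
      \<Sum>t\<in>trees (Suc n). exp (\<Lambda> * \<sigma>) * inflow t \<sigma> * \<phi> t)"
    by (simp only: integral_sum[OF finite_trees integrable])
  also have "\<dots> = \<phi> Leaf + integral {0..r} (\<lambda>\<sigma>. exp (\<Lambda> * \<sigma>) * (\<Sum>t\<in>trees (Suc n). inflow t \<sigma> * \<phi> t))"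
    by (simp only: sum_distrib_left mult.assoc)
  finally show ?thesis .
qed

lemma inflow_sum_trees_Suc:
  assumes rule: "branching_rule \<phi> \<alpha> \<beta> \<delta>"
  shows "(\<Sum>t\<in>trees (Suc n). inflow t \<sigma> * \<phi> t) =
           branching_inflow (\<lambda>\<psi>. expect_on (trees n) \<psi> \<sigma>) \<alpha> \<beta> \<delta>"
proof -
  let ?T = "trees n" and ?P = "\<lambda>a. prob a \<sigma>"
  let ?E = "\<lambda>\<psi>. expect_on ?T \<psi> \<sigma>"
  have circle_free: "circle_free a" if "a \<in> ?T" for a
    using that by (rule circle_free_if_in_trees)
  have Bin: "(\<Sum>(a, b) \<in> ?T \<times> ?T. inflow (Bin a b) \<sigma> * \<phi> (Bin a b)) = s * ?E \<alpha> * ?E \<beta>"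
  proof -
    have "(\<Sum>(a, b) \<in> ?T \<times> ?T. inflow (Bin a b) \<sigma> * \<phi> (Bin a b)) =
        s * (\<Sum>(a, b) \<in> ?T \<times> ?T. (?P a * \<alpha> a) * (?P b * \<beta> b))"
      unfolding sum_distrib_left using rule circle_free
      by (intro sum.cong refl) (auto simp: branching_rule_def mult_ac simp del: asg_prob.simps)
    also have "\<dots> = s * (?E \<alpha> * ?E \<beta>)"
      by (simp only: sum_product_Times expect_on_def)
    finally show ?thesis by (simp only: mult.assoc)
  qed
  have pairs: "(\<Sum>(b, c) \<in> ?T \<times> ?T. ?P b * ?P c * (1 - (1 - \<beta> b) * (1 - \<beta> c))) =
      ?E (\<lambda>_. 1) ^ 2 - (?E (\<lambda>_. 1) - ?E \<beta>) ^ 2"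
    unfolding expect_on_def mult_1_right by (rule sum_Times_or)
  have Ter: "(\<Sum>(a, b, c) \<in> ?T \<times> ?T \<times> ?T. inflow (Ter a b c) \<sigma> * \<phi> (Ter a b c)) =
      g * ?E \<alpha> * (?E (\<lambda>_. 1) ^ 2 - (?E (\<lambda>_. 1) - ?E \<beta>) ^ 2)"
  proof -
    have "(\<Sum>(a, b, c) \<in> ?T \<times> ?T \<times> ?T. inflow (Ter a b c) \<sigma> * \<phi> (Ter a b c)) =
        g * (\<Sum>(a, bc) \<in> ?T \<times> (?T \<times> ?T). (?P a * \<alpha> a) *
          (\<lambda>(b, c). ?P b * ?P c * (1 - (1 - \<beta> b) * (1 - \<beta> c))) bc)"
      unfolding sum_distrib_left using rule circle_free
      by (intro sum.cong refl) (auto simp: branching_rule_def mult_ac simp del: asg_prob.simps)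
    also have "\<dots> = g * (?E \<alpha> *
        (\<Sum>(b, c) \<in> ?T \<times> ?T. ?P b * ?P c * (1 - (1 - \<beta> b) * (1 - \<beta> c))))"
      by (simp only: expect_on_def sum_product_Times[symmetric])
    also have "\<dots> = g * (?E \<alpha> * (?E (\<lambda>_. 1) ^ 2 - (?E (\<lambda>_. 1) - ?E \<beta>) ^ 2))"
      by (simp only: pairs)
    finally show ?thesis by (simp only: mult.assoc)
  qed
  have MutX: "(\<Sum>a \<in> ?T. inflow (MutX a) \<sigma> * \<phi> (MutX a)) = u * ?E \<delta>"
    using rule
    by (simp add: branching_rule_def expect_on_def sum_distrib_left mult.assoc del: asg_prob.simps)
  show ?thesis
    by (simp only: sum_trees_Suc Bin Ter MutX branching_inflow_def) simp
qed

lemma expect_on_nonneg: "0 \<le> \<sigma> \<Longrightarrow> (\<And>t. 0 \<le> \<phi> t) \<Longrightarrow> 0 \<le> expect_on A \<phi> \<sigma>"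
  unfolding expect_on_def by (intro sum_nonneg mult_nonneg_nonneg asg_prob_nonneg)

lemma expect_on_mono:
  "0 \<le> \<sigma> \<Longrightarrow> (\<And>t. \<phi> t \<le> \<psi> t) \<Longrightarrow> expect_on A \<phi> \<sigma> \<le> expect_on A \<psi> \<sigma>"
  unfolding expect_on_def by (intro sum_mono mult_left_mono asg_prob_nonneg)

lemma inflow_sum_trees_Suc_le:
  assumes "0 \<le> \<sigma>" and mass: "expect_on (trees n) (\<lambda>_. 1) \<sigma> \<le> 1"
  shows "(\<Sum>t\<in>trees (Suc n). inflow t \<sigma>) \<le> \<Lambda>"
proof -
  let ?M = "expect_on (trees n) (\<lambda>_. 1) \<sigma>"
  have "0 \<le> ?M" using assms(1) by (rule expect_on_nonneg) simp
  with mass have "?M * ?M \<le> 1" "?M * ?M ^ 2 \<le> 1"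
    by (simp_all add: mult_le_one power_le_one)
  with \<open>0 \<le> ?M\<close> mass s_nonneg g_nonneg u_nonneg
  have "s * (?M * ?M) + g * (?M * ?M ^ 2) + u * ?M \<le> s + g + u"
    by (intro add_mono mult_left_le) auto
  then show ?thesis
    using inflow_sum_trees_Suc[OF branching_rule_one, where n = n and \<sigma> = \<sigma>]
    by (simp add: branching_inflow_def mult.assoc)
qed

lemma expect_on_trees_one_le: "0 \<le> r \<Longrightarrow> expect_on (trees n) (\<lambda>_. 1) r \<le> 1"
proof (induction n arbitrary: r)
  case 0
  then show ?case by (simp add: expect_on_def)
next
  case (Suc n)
  have "integral {0..r} (\<lambda>\<sigma>. exp (\<Lambda> * \<sigma>) * (\<Sum>t\<in>trees (Suc n). inflow t \<sigma>))
      \<le> integral {0..r} (\<lambda>\<sigma>. exp (\<Lambda> * \<sigma>) * \<Lambda>)"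
    using Suc.IH
    by (intro integral_le integrable_continuous_real continuous_intros continuous_on_inflow
        mult_left_mono inflow_sum_trees_Suc_le) auto
  also have "\<dots> = exp (\<Lambda> * r) - 1"
    using Suc.prems by (rule integral_exp_mult_self)
  finally have "exp (\<Lambda> * r) * expect_on (trees (Suc n)) (\<lambda>_. 1) r \<le> exp (\<Lambda> * r) * 1"
    using expect_on_trees_integral_equation[of r n "\<lambda>_. 1"] by simp
  then show ?case by simp
qed

lemma expect_on_trees_bounded:
  assumes "0 \<le> \<sigma>" "range \<phi> \<subseteq> {0..1}"
  shows "expect_on (trees n) \<phi> \<sigma> \<in> {0..1}"
proof -
  have "0 \<le> \<phi> t" "\<phi> t \<le> 1" for t
    using assms(2) by (auto simp: image_subset_iff)
  then have "0 \<le> expect_on (trees n) \<phi> \<sigma>"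
    "expect_on (trees n) \<phi> \<sigma> \<le> expect_on (trees n) (\<lambda>_. 1) \<sigma>"
    using assms(1) by (simp_all add: expect_on_nonneg expect_on_mono)
  with expect_on_trees_one_le[OF assms(1), of n] show ?thesis by simp
qed

lemma inflow_sum_trees_Suc_bounded:
  assumes "0 \<le> \<sigma>" "range \<phi> \<subseteq> {0..1}"
  shows "0 \<le> (\<Sum>t\<in>trees (Suc n). inflow t \<sigma> * \<phi> t)"
    and "(\<Sum>t\<in>trees (Suc n). inflow t \<sigma> * \<phi> t) \<le> \<Lambda>"
proof -
  have \<phi>: "0 \<le> \<phi> t" "\<phi> t \<le> 1" for t
    using assms(2) by (auto simp: image_subset_iff)
  show "0 \<le> (\<Sum>t\<in>trees (Suc n). inflow t \<sigma> * \<phi> t)"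
    using assms(1) \<phi> by (intro sum_nonneg mult_nonneg_nonneg inflow_nonneg)
  have "(\<Sum>t\<in>trees (Suc n). inflow t \<sigma> * \<phi> t) \<le> (\<Sum>t\<in>trees (Suc n). inflow t \<sigma>)"
    using assms(1) \<phi> by (intro sum_mono mult_left_le inflow_nonneg)
  also have "\<dots> \<le> \<Lambda>"
    using assms(1) by (intro inflow_sum_trees_Suc_le expect_on_trees_one_le)
  finally show "(\<Sum>t\<in>trees (Suc n). inflow t \<sigma> * \<phi> t) \<le> \<Lambda>" .
qed

lemma expect_on_trees_tendsto:
  assumes "0 \<le> \<sigma>" "range \<phi> \<subseteq> {0..1}"
  shows "(\<lambda>n. expect_on (trees n) \<phi> \<sigma>) \<longlonglongrightarrow> expect \<phi> \<sigma>"
  unfolding expect_on_def expect_def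
proof (rule infsum_tendsto_exhausting[OF incseq_trees finite_trees])
  show "t \<in> (\<Union>n. trees n)" if "prob t \<sigma> * \<phi> t \<noteq> 0" for t
    using that in_trees_if_circle_free asg_prob_eq_0_if_not_circle_free by fastforce
  show "0 \<le> prob t \<sigma> * \<phi> t" for t
    using assms by (auto simp: image_subset_iff intro!: mult_nonneg_nonneg asg_prob_nonneg)
  show "(\<Sum>t\<in>trees n. prob t \<sigma> * \<phi> t) \<le> 1" for n
    using expect_on_trees_bounded[OF assms, of n] by (simp add: expect_on_def)
qed

lemma expect_integral_equation:
  assumes rule: "branching_rule \<phi> \<alpha> \<beta> \<delta>" and "0 \<le> r"
  shows "exp (\<Lambda> * r) * expect \<phi> r = \<phi> Leaf +
           integral {0..r} (\<lambda>\<sigma>. exp (\<Lambda> * \<sigma>) * branching_inflow (\<lambda>\<psi>. expect \<psi> \<sigma>) \<alpha> \<beta> \<delta>)"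
    and "(\<lambda>\<sigma>. exp (\<Lambda> * \<sigma>) * branching_inflow (\<lambda>\<psi>. expect \<psi> \<sigma>) \<alpha> \<beta> \<delta>) integrable_on {0..r}"
proof -
  have bounded: "range \<phi> \<subseteq> {0..1}" "range \<alpha> \<subseteq> {0..1}" "range \<beta> \<subseteq> {0..1}"
    "range \<delta> \<subseteq> {0..1}" "range (\<lambda>_ :: asg. 1 :: real) \<subseteq> {0..1}"
    using rule by (auto simp: branching_rule_def)
  let ?f = "\<lambda>n \<sigma>. exp (\<Lambda> * \<sigma>) * (\<Sum>t\<in>trees (Suc n). inflow t \<sigma> * \<phi> t)"
  have integrable: "?f n integrable_on {0..r}" for n
    by (intro integrable_continuous_real continuous_intros continuous_on_inflow)
  have mono: "?f n \<sigma> \<le> ?f (Suc n) \<sigma>" if "\<sigma> \<in> {0..r}" for n \<sigma>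
    using that bounded(1) incseq_SucD[OF incseq_trees, of "Suc n"]
    by (intro mult_left_mono sum_mono2 finite_trees)
      (auto simp: image_subset_iff intro!: mult_nonneg_nonneg inflow_nonneg simp del: trees.simps)
  have bound: "0 \<le> ?f n \<sigma> \<and> ?f n \<sigma> \<le> exp (\<Lambda> * r) * \<Lambda>" if "\<sigma> \<in> {0..r}" for n \<sigma>
  proof -
    have "exp (\<Lambda> * \<sigma>) \<le> exp (\<Lambda> * r)"
      using that s_nonneg g_nonneg u_nonneg by (auto intro: mult_left_mono)
    with that inflow_sum_trees_Suc_bounded[OF _ bounded(1)] show ?thesis
      by (auto intro: mult_mono)
  qed
  have limit: "(\<lambda>n. ?f n \<sigma>) \<longlonglongrightarrow> exp (\<Lambda> * \<sigma>) * branching_inflow (\<lambda>\<psi>. expect \<psi> \<sigma>) \<alpha> \<beta> \<delta>"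
    if "\<sigma> \<in> {0..r}" for \<sigma>
    using that bounded unfolding inflow_sum_trees_Suc[OF rule] branching_inflow_def
    by (intro tendsto_intros expect_on_trees_tendsto) auto
  have "(\<lambda>n. exp (\<Lambda> * r) * expect_on (trees n) \<phi> r) \<longlonglongrightarrow> exp (\<Lambda> * r) * expect \<phi> r"
    using \<open>0 \<le> r\<close> bounded(1) by (intro tendsto_intros expect_on_trees_tendsto)
  note limit_of_integral_equations[where C = "\<lambda>n. exp (\<Lambda> * r) * expect_on (trees n) \<phi> r"
      and f = ?f, OF expect_on_trees_integral_equation integrable mono bound limit this]
  then show "exp (\<Lambda> * r) * expect \<phi> r = \<phi> Leaf +
      integral {0..r} (\<lambda>\<sigma>. exp (\<Lambda> * \<sigma>) * branching_inflow (\<lambda>\<psi>. expect \<psi> \<sigma>) \<alpha> \<beta> \<delta>)"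
    and "(\<lambda>\<sigma>. exp (\<Lambda> * \<sigma>) * branching_inflow (\<lambda>\<psi>. expect \<psi> \<sigma>) \<alpha> \<beta> \<delta>) integrable_on {0..r}"
    by simp_all
qed

lemma continuous_on_expect:
  assumes "branching_rule \<phi> \<alpha> \<beta> \<delta>"
  shows "continuous_on {0..R} (expect \<phi>)"
proof (cases "0 \<le> R")
  case True
  show ?thesis
    by (rule continuous_on_integral_equation[OF expect_integral_equation(1)[OF assms]
          expect_integral_equation(2)[OF assms True]]) auto
qed simp

lemma has_real_derivative_expect:
  assumes "branching_rule \<phi> \<alpha> \<beta> \<delta>"
    and "continuous_on {0..R} (\<lambda>\<sigma>. branching_inflow (\<lambda>\<psi>. expect \<psi> \<sigma>) \<alpha> \<beta> \<delta>)"
    and "\<rho> \<in> {0..R}"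
  shows "(expect \<phi> has_real_derivative
           - \<Lambda> * expect \<phi> \<rho> + branching_inflow (\<lambda>\<psi>. expect \<psi> \<rho>) \<alpha> \<beta> \<delta>) (at \<rho> within {0..R})"
  by (rule has_real_derivative_integral_equation[OF expect_integral_equation(1)[OF assms(1)]
        assms(2,3)]) auto

lemma expect_at_0: "branching_rule \<phi> \<alpha> \<beta> \<delta> \<Longrightarrow> expect \<phi> 0 = \<phi> Leaf"
  using expect_integral_equation(1)[of \<phi> \<alpha> \<beta> \<delta> 0] by simp

lemma expect_one:
  assumes "0 \<le> r"
  shows "expect (\<lambda>_. 1) r = 1"
proof -
  let ?M = "expect (\<lambda>_. 1)"
  have continuous: "continuous_on {0..r} ?M"
    by (rule continuous_on_expect[OF branching_rule_one])
  have "((\<lambda>x. ?M x - 1) has_real_derivative ?M x * (s + g * (1 + ?M x)) * (?M x - 1))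
      (at x within {0..r})" if "x \<in> {0..r}" for x
  proof -
    have "(?M has_real_derivative - \<Lambda> * ?M x +
        branching_inflow (\<lambda>\<psi>. expect \<psi> x) (\<lambda>_. 1) (\<lambda>_. 1) (\<lambda>_. 1)) (at x within {0..r})"
      using continuous that unfolding branching_inflow_def
      by (intro has_real_derivative_expect[OF branching_rule_one, unfolded branching_inflow_def]
          continuous_intros)
    from DERIV_diff[OF this DERIV_const[of 1]] show ?thesis
      by (simp add: branching_inflow_def power2_eq_square algebra_simps)
  qed
  then have "?M r - 1 = 0"
  proof (rule linear_ode_zero[where D = "\<lambda>x. ?M x - 1" and q = "\<lambda>x. ?M x * (s + g * (1 + ?M x))"])
    show "continuous_on {0..r} (\<lambda>x. ?M x * (s + g * (1 + ?M x)))"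
      using continuous by (intro continuous_intros)
    show "?M 0 - 1 = 0"
      using expect_at_0[OF branching_rule_one] by simp
  qed (use assms in auto)
  then show ?thesis by simp
qed

lemma has_real_derivative_expect_root_type1_prob:
  assumes p: "p \<in> {0..1}" and x: "x \<in> {0..R}"
  defines "Y \<equiv> expect (\<lambda>t. root_type1_prob t p)"
  shows "(Y has_real_derivative - Y x * (1 - Y x) * (s + g * (1 - Y x)) + u * (1 - Y x))
           (at x within {0..R})"
proof -
  note rule = branching_rule_root_type1[OF p]
  have "continuous_on {0..R} (expect (\<lambda>_. 1))"
    by (rule continuous_on_expect[OF branching_rule_one])
  moreover have "continuous_on {0..R} Y"
    unfolding Y_def by (rule continuous_on_expect[OF rule])
  ultimately have "(Y has_real_derivative - \<Lambda> * Y x + branching_inflow (\<lambda>\<psi>. expect \<psi> x)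
      (\<lambda>t. root_type1_prob t p) (\<lambda>t. root_type1_prob t p) (\<lambda>_. 1)) (at x within {0..R})"
    using x unfolding Y_def branching_inflow_def
    by (intro has_real_derivative_expect[OF rule, unfolded branching_inflow_def] continuous_intros)
  then show ?thesis
    using expect_one[of x] x
    by (simp add: branching_inflow_def Y_def power2_eq_square algebra_simps)
qed

lemma has_real_derivative_expect_anc_type1_prob:
  assumes p: "p \<in> {0..1}" and x: "x \<in> {0..R}"
  defines "Y \<equiv> expect (\<lambda>t. root_type1_prob t p)" and "G \<equiv> expect (\<lambda>t. anc_type1_prob t p)"
  shows "(G has_real_derivative - (1 - Y x) * (s + g * (1 - Y x)) * G x) (at x within {0..R})"
proof -
  note rule = branching_rule_anc_type1[OF p]
  have "continuous_on {0..R} (expect (\<lambda>_. 1))"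
    by (rule continuous_on_expect[OF branching_rule_one])
  moreover have "continuous_on {0..R} Y"
    unfolding Y_def by (rule continuous_on_expect[OF branching_rule_root_type1[OF p]])
  moreover have "continuous_on {0..R} G"
    unfolding G_def by (rule continuous_on_expect[OF rule])
  ultimately have "(G has_real_derivative - \<Lambda> * G x + branching_inflow (\<lambda>\<psi>. expect \<psi> x)
      (\<lambda>t. anc_type1_prob t p) (\<lambda>t. root_type1_prob t p) (\<lambda>t. anc_type1_prob t p))
      (at x within {0..R})"
    using x unfolding Y_def G_def branching_inflow_def
    by (intro has_real_derivative_expect[OF rule, unfolded branching_inflow_def] continuous_intros)
  then show ?thesis
    using expect_one[of x] x
    by (simp add: branching_inflow_def Y_def G_def power2_eq_square algebra_simps)
qed

lemma expect_root_type1_prob: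
  assumes p: "p \<in> {0..1}" and y0: "y 0 = p"
    and y': "\<forall>\<xi>\<in>{0..r}. (y has_real_derivative
               - y \<xi> * (1 - y \<xi>) * (s + g * (1 - y \<xi>)) + u * (1 - y \<xi>)) (at \<xi> within {0..r})"
    and x: "x \<in> {0..r}"
  shows "expect (\<lambda>t. root_type1_prob t p) x = y x"
proof -
  let ?Y = "expect (\<lambda>t. root_type1_prob t p)"
  define q where "q x = - \<Lambda> + (s + 2 * g) * (?Y x + y x) - g * (?Y x ^ 2 + ?Y x * y x + y x ^ 2)"
    for x
  have "((\<lambda>x. ?Y x - y x) has_real_derivative q x * (?Y x - y x)) (at x within {0..r})"
    if "x \<in> {0..r}" for x
    using DERIV_diff[OF has_real_derivative_expect_root_type1_prob[OF p that]
        y'[rule_format, OF that]]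
    by (simp add: q_def power2_eq_square algebra_simps)
  then have "?Y x - y x = 0"
  proof (rule linear_ode_zero[where D = "\<lambda>x. ?Y x - y x" and q = q, OF _ _ _ x])
    have "continuous_on {0..r} ?Y" "continuous_on {0..r} y"
      using y' by (auto intro: continuous_on_expect branching_rule_root_type1[OF p]
          DERIV_continuous_on)
    then show "continuous_on {0..r} q"
      unfolding q_def by (intro continuous_intros)
    show "?Y 0 - y 0 = 0"
      using expect_at_0[OF branching_rule_root_type1[OF p]] y0 by (simp add: root_type1_prob_Leaf)
  qed
  then show ?thesis by simp
qed

lemma expect_anc_type1_prob:
  assumes p: "p \<in> {0..1}" and y0: "y 0 = p"
    and y': "\<forall>\<xi>\<in>{0..r}. (y has_real_derivative
               - y \<xi> * (1 - y \<xi>) * (s + g * (1 - y \<xi>)) + u * (1 - y \<xi>)) (at \<xi> within {0..r})"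
    and r: "0 \<le> r"
  shows "expect (\<lambda>t. anc_type1_prob t p) r =
           p * exp (- integral {0..r} (\<lambda>\<xi>. (1 - y \<xi>) * (s + g * (1 - y \<xi>))))"
proof -
  let ?G = "expect (\<lambda>t. anc_type1_prob t p)"
  define k where "k = (\<lambda>\<xi>. (1 - y \<xi>) * (s + g * (1 - y \<xi>)))"
  define H where "H x = p * exp (- integral {0..x} k)" for x
  have "continuous_on {0..r} y"
    using y' by (auto intro: DERIV_continuous_on)
  then have k: "continuous_on {0..r} k"
    unfolding k_def by (intro continuous_intros)
  have "((\<lambda>x. ?G x - H x) has_real_derivative - k x * (?G x - H x)) (at x within {0..r})"
    if "x \<in> {0..r}" for x
  proof -
    have "(H has_real_derivative - k x * H x) (at x within {0..r})"
      using integral_has_real_derivative[OF k that]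
      unfolding H_def by (auto intro!: derivative_eq_intros)
    with has_real_derivative_expect_anc_type1_prob[OF p that] show ?thesis
      unfolding expect_root_type1_prob[OF p y0 y' that] k_def
      by (auto intro!: derivative_eq_intros simp: algebra_simps)
  qed
  then have "?G r - H r = 0"
  proof (rule linear_ode_zero[where D = "\<lambda>x. ?G x - H x" and q = "\<lambda>x. - k x"])
    show "continuous_on {0..r} (\<lambda>x. - k x)"
      using k by (intro continuous_intros)
    show "?G 0 - H 0 = 0"
      using expect_at_0[OF branching_rule_anc_type1[OF p]] by (simp add: H_def anc_type1_prob_Leaf)
  qed (use r in auto)
  then show ?thesis by (simp add: H_def k_def)
qed

end

theorem theorem2p38:
  fixes s \<gamma> u nu0 nu1 r y0 :: real and y :: "real \<Rightarrow> real"
  assumes "nu0 = 0" and "nu0 + nu1 = 1"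
    and "s > 0" and "\<gamma> \<ge> 0" and "u > 0"
    and "r \<ge> 0" and "y0 \<in> {0..1}"
    and "y 0 = y0"
    and "\<forall>\<xi>\<in>{0..r}. (y has_real_derivative
           (- y \<xi> * (1 - y \<xi>) * (s + \<gamma> * (1 - y \<xi>)) + u * (1 - y \<xi>)))
           (at \<xi> within {0..r})"
  shows "g_asg s \<gamma> u nu0 nu1 r y0 =
         y0 * exp (- integral {0..r} (\<lambda>\<xi>. (1 - y \<xi>) * (s + \<gamma> * (1 - y \<xi>))))"
proof -
  interpret asg_rates s \<gamma> u
    using assms(3-5) by unfold_locales auto
  have "nu1 = 1" using assms(1,2) by simp
  then have "g_asg s \<gamma> u nu0 nu1 r y0 = expect (\<lambda>t. anc_type1_prob t y0) r"
    by (simp add: g_asg_def expect_def assms(1))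
  also have "\<dots> = y0 * exp (- integral {0..r} (\<lambda>\<xi>. (1 - y \<xi>) * (s + \<gamma> * (1 - y \<xi>))))"
    by (rule expect_anc_type1_prob[OF assms(7-9,6)])
  finally show ?thesis .
qed

end
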